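(* Let $2s$ be a positive integer and let $f_0,f_1,\dots,f_{2s}$ be the Veronese sequence (defined in the context). Then for all $0\le k\le 2s$, $0\le j\le 2s$ and all $\xi_+\in\mathbb{C}\setminus\{0\}$, $$(f_k)_j=\frac{(2s)!}{(2s-k)!}\left(\frac{-\xi_-}{1+\xi_+\xi_-}\right)^k\sqrt{\binom{2s}{j}}\,\xi_+^j\,K_j(k;p,2s),$$ and the rank-1 Hermitian projectors $P_k=\frac{f_k f_k^\dagger}{f_k^\dagger f_k}$ have entries $$(P_k)_{ij}=\binom{2s}{k}\frac{(\xi_+\xi_-)^k}{(1+\xi_+\xi_-)^{2s}}\,\xi_+^i\xi_-^j\sqrt{\binom{2s}{i}\binom{2s}{j}}\,K_i(k;p,2s)K_j(k;p,2s),\qquad 0\le i,j\le 2s.$$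
   Context: Let $2s\in\mathbb{Z}_{>0}$. Let $\xi_+\in\mathbb{C}$, $\xi_-=\overline{\xi_+}$ (with $\xi_\pm=\xi^1\pm i\xi^2$), and set $p=\frac{\xi_+\xi_-}{1+\xi_+\xi_-}$. Let $\partial=\frac12(\partial_{\xi^1}-i\partial_{\xi^2})$ and $\bar\partial=\frac12(\partial_{\xi^1}+i\partial_{\xi^2})$. Vectors in $\mathbb{C}^{2s+1}$ have components indexed by $0,\dots,2s$. The Krawtchouk polynomials are, for integers $0\le j,k\le N$ and $0<p<1$, $K_j(k;p,N)={}_2F_1(-j,-k;-N;1/p)=\sum_{n=0}^{\min(j,k)}\frac{(-j)_n(-k)_n}{(-N)_n\,n!}p^{-n}$, where $(a)_n$ is the Pochhammer symbol; in particular $K_j(0;p,N)=1$. The Veronese sequence is defined by $(f_0)_j=\sqrt{\binom{2s}{j}}\,\xi_+^j$ for $0\le j\le 2s$, and recursively $f_{k+1}=\left(\mathbf{1}_{2s+1}-\frac{f_k f_k^\dagger}{f_k^\dagger f_k}\right)\partial f_k$ for $0\le k\le 2s-1$, where $\mathbf 1_{2s+1}$ is the identity matrix and $\dagger$ denotes conjugate transpose. *)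

theory Defs
  imports "HOL-Analysis.Analysis"
begin

definition pd1 :: "(complex \<Rightarrow> complex) \<Rightarrow> complex \<Rightarrow> complex" where
  "pd1 g z = vector_derivative (\<lambda>t::real. g (z + of_real t)) (at 0)"

definition pd2 :: "(complex \<Rightarrow> complex) \<Rightarrow> complex \<Rightarrow> complex" where
  "pd2 g z = vector_derivative (\<lambda>t::real. g (z + \<i> * of_real t)) (at 0)"

definition wirtinger :: "(complex \<Rightarrow> complex) \<Rightarrow> complex \<Rightarrow> complex" where
  "wirtinger g z = (pd1 g z - \<i> * pd2 g z) / 2"

text \<open>Veronese sequence, N = 2s; vectors in C^(N+1) are functions nat => complex,
components indexed by 0..N; xi_+ is the variable z and xi_- = cnj z.
f_(k+1) = (1 - f_k f_k^dagger / (f_k^dagger f_k)) (d f_k).\<close>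

fun veronese :: "nat \<Rightarrow> nat \<Rightarrow> complex \<Rightarrow> nat \<Rightarrow> complex" where
  "veronese N 0 z j = of_real (sqrt (real (N choose j))) * z ^ j"
| "veronese N (Suc k) z j =
     wirtinger (\<lambda>w. veronese N k w j) z
     - veronese N k z j *
       ((\<Sum>l\<le>N. cnj (veronese N k z l) * wirtinger (\<lambda>w. veronese N k w l) z)
        / (\<Sum>l\<le>N. cnj (veronese N k z l) * veronese N k z l))"

definition veronese_proj :: "nat \<Rightarrow> nat \<Rightarrow> complex \<Rightarrow> nat \<Rightarrow> nat \<Rightarrow> complex" where
  "veronese_proj N k z i j =
     veronese N k z i * cnj (veronese N k z j)
     / (\<Sum>l\<le>N. cnj (veronese N k z l) * veronese N k z l)"

definition krawtchouk :: "nat \<Rightarrow> nat \<Rightarrow> real \<Rightarrow> nat \<Rightarrow> real" where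
  "krawtchouk j k p N =
     (\<Sum>n\<le>min j k. pochhammer (- real j) n * pochhammer (- real k) n
        / (pochhammer (- real N) n * fact n) * (1 / p) ^ n)"

end

theory Submission
  imports Defs
begin

text \<open>
  Write D = 1 + xi_+ xi_- and u = - xi_- / D, so that d D = xi_-, d u = u^2 and dbar u = - 1 / D^2,
  where d and dbar are the Wirtinger derivatives. The vectors
  G_k = \<Sum>n\<le>k. (k choose n) (N - n)! / (N - k)! u^(k-n) d^n f_0
  satisfy d G_k = G_(k+1) + (2k - N) u G_k and dbar G_k = - k (N + 1 - k) / D^2 G_(k-1).
  Differentiating the inner products <G_m, G_k> with d, using d <G_m, G_k> = <G_m, d G_k> + <dbar G_m, G_k>,
  these identities show by induction on k that the G_k are mutually orthogonal with
  |G_k|^2 = k! N! / (N - k)! D^(N - 2k). Orthogonality turns the Gram-Schmidt step that defines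
  f_(k+1) from f_k into the step from G_k to G_(k+1), hence f_k = G_k. Finally u xi_+ = - p
  identifies the terms of G_k with those of the Krawtchouk series, and P_k = G_k G_k^dagger / |G_k|^2.
\<close>

section \<open>Wirtinger derivatives\<close>

definition has_wirtinger_derivs :: "(complex \<Rightarrow> complex) \<Rightarrow> complex \<Rightarrow> complex \<Rightarrow> complex \<Rightarrow> bool"
  where "has_wirtinger_derivs g a b z \<longleftrightarrow> (g has_derivative (\<lambda>h. a * h + b * cnj h)) (at z)"

lemma wirtinger_eqI:
  assumes "has_wirtinger_derivs g a b z"
  shows "wirtinger g z = a"
proof -
  have g: "(g has_derivative (\<lambda>h. a * h + b * cnj h)) (at z)"
    using assms by (simp add: has_wirtinger_derivs_def)
  have "((\<lambda>t::real. z + c * of_real t) has_derivative (\<lambda>t. c * of_real t)) (at 0)" for c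
    by (auto intro!: derivative_eq_intros)
  then have "((\<lambda>t. g (z + c * of_real t)) has_derivative
      (\<lambda>t. a * (c * of_real t) + b * cnj (c * of_real t))) (at 0)" for c
    using has_derivative_compose g by fastforce
  then have "((\<lambda>t. g (z + c * of_real t)) has_vector_derivative (a * c + b * cnj c)) (at 0)" for c
    unfolding has_vector_derivative_def
    by (rule has_derivative_eq_rhs) (auto simp: fun_eq_iff scaleR_conv_of_real algebra_simps)
  from this[of 1] this[of \<i>] have pd: "pd1 g z = a + b" "pd2 g z = \<i> * a - \<i> * b"
    unfolding pd1_def pd2_def by (auto dest!: vector_derivative_at simp: algebra_simps)
  show ?thesis
    unfolding wirtinger_def pd by (simp add: algebra_simps)
qed

lemma has_wirtinger_derivs_cong:
  "has_wirtinger_derivs f a b z \<Longrightarrow> (\<And>w. f w = g w) \<Longrightarrow> a = a' \<Longrightarrow> b = b' \<Longrightarrow>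
    has_wirtinger_derivs g a' b' z"
  by (metis ext)

lemma has_wirtinger_derivs_const: "has_wirtinger_derivs (\<lambda>w. c) 0 0 z"
  by (simp add: has_wirtinger_derivs_def)

lemma wirtinger_const: "wirtinger (\<lambda>w. c) z = 0"
  by (rule wirtinger_eqI[OF has_wirtinger_derivs_const])

lemma has_wirtinger_derivs_ident: "has_wirtinger_derivs (\<lambda>w. w) 1 0 z"
  unfolding has_wirtinger_derivs_def by (rule has_derivative_eq_rhs[OF has_derivative_ident]) simp

lemma has_wirtinger_derivs_cnj: "has_wirtinger_derivs (\<lambda>w. cnj w) 0 1 z"
  unfolding has_wirtinger_derivs_def
  by (rule has_derivative_eq_rhs[OF has_derivative_cnj[OF has_derivative_ident]]) simp

lemma has_wirtinger_derivs_cnj_fun: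
  "has_wirtinger_derivs f a b z \<Longrightarrow> has_wirtinger_derivs (\<lambda>w. cnj (f w)) (cnj b) (cnj a) z"
  unfolding has_wirtinger_derivs_def
  by (rule has_derivative_eq_rhs, rule has_derivative_cnj) (auto simp: fun_eq_iff)

lemma has_wirtinger_derivs_add:
  "has_wirtinger_derivs f a1 b1 z \<Longrightarrow> has_wirtinger_derivs g a2 b2 z \<Longrightarrow>
    has_wirtinger_derivs (\<lambda>w. f w + g w) (a1 + a2) (b1 + b2) z"
  unfolding has_wirtinger_derivs_def
  by (rule has_derivative_eq_rhs, rule has_derivative_add) (auto simp: fun_eq_iff algebra_simps)

lemma has_wirtinger_derivs_minus:
  "has_wirtinger_derivs f a b z \<Longrightarrow> has_wirtinger_derivs (\<lambda>w. - f w) (- a) (- b) z"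
  unfolding has_wirtinger_derivs_def
  by (rule has_derivative_eq_rhs, rule has_derivative_minus) (auto simp: fun_eq_iff algebra_simps)

lemma has_wirtinger_derivs_mult:
  "has_wirtinger_derivs f a1 b1 z \<Longrightarrow> has_wirtinger_derivs g a2 b2 z \<Longrightarrow>
    has_wirtinger_derivs (\<lambda>w. f w * g w) (f z * a2 + a1 * g z) (f z * b2 + b1 * g z) z"
  unfolding has_wirtinger_derivs_def
  by (rule has_derivative_eq_rhs, rule has_derivative_mult) (auto simp: fun_eq_iff algebra_simps)

lemma has_wirtinger_derivs_cmult:
  "has_wirtinger_derivs g a b z \<Longrightarrow> has_wirtinger_derivs (\<lambda>w. c * g w) (c * a) (c * b) z"
  using has_wirtinger_derivs_mult[OF has_wirtinger_derivs_const] by simp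

lemma has_wirtinger_derivs_divide:
  "has_wirtinger_derivs f a1 b1 z \<Longrightarrow> has_wirtinger_derivs g a2 b2 z \<Longrightarrow> g z \<noteq> 0 \<Longrightarrow>
    has_wirtinger_derivs (\<lambda>w. f w / g w)
      ((a1 * g z - f z * a2) / (g z)\<^sup>2) ((b1 * g z - f z * b2) / (g z)\<^sup>2) z"
  unfolding has_wirtinger_derivs_def
  by (rule has_derivative_eq_rhs, rule has_derivative_divide)
     (auto simp: fun_eq_iff field_simps power2_eq_square)

lemma has_wirtinger_derivs_power:
  "has_wirtinger_derivs f a b z \<Longrightarrow>
    has_wirtinger_derivs (\<lambda>w. f w ^ n) (of_nat n * f z ^ (n - 1) * a) (of_nat n * f z ^ (n - 1) * b) z"
  unfolding has_wirtinger_derivs_def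
  by (rule has_derivative_eq_rhs, rule has_derivative_power) (auto simp: fun_eq_iff algebra_simps)

lemma has_wirtinger_derivs_sum:
  "(\<And>i. i \<in> I \<Longrightarrow> has_wirtinger_derivs (f i) (a i) (b i) z) \<Longrightarrow>
    has_wirtinger_derivs (\<lambda>w. \<Sum>i\<in>I. f i w) (\<Sum>i\<in>I. a i) (\<Sum>i\<in>I. b i) z"
  unfolding has_wirtinger_derivs_def
  by (rule has_derivative_eq_rhs, rule has_derivative_sum)
     (auto simp: fun_eq_iff sum_distrib_right sum.distrib)

lemma wirtinger_sum_cnj_mult:
  assumes "\<And>l. l \<in> I \<Longrightarrow> has_wirtinger_derivs (f l) (af l) (bf l) z"
    and "\<And>l. l \<in> I \<Longrightarrow> has_wirtinger_derivs (g l) (ag l) (bg l) z"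
  shows "wirtinger (\<lambda>w. \<Sum>l\<in>I. cnj (f l w) * g l w) z = (\<Sum>l\<in>I. cnj (f l z) * ag l + cnj (bf l) * g l z)"
  by (rule wirtinger_eqI, rule has_wirtinger_derivs_sum,
      rule has_wirtinger_derivs_mult[OF has_wirtinger_derivs_cnj_fun[OF assms(1)] assms(2)])

lemma Suc_mult_choose_Suc: "Suc n * (j choose Suc n) = (j - n) * (j choose n)"
  by (metis binomial_absorb_comp binomial_absorption)

lemma fact_diff_eq_Suc: "m < N \<Longrightarrow> (fact (N - m) :: real) = real (N - m) * fact (N - Suc m)"
  by (metis Suc_diff_Suc fact_Suc)

lemma mult_power_pred_eq: "x \<noteq> 0 \<Longrightarrow> of_nat n * x ^ (n - 1) = of_nat n * x ^ n / (x :: 'a :: field)"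
  by (cases n) auto

lemma pochhammer_minus_of_nat: "pochhammer (- real j) n = (- 1) ^ n * fact n * real (j choose n)"
  by (simp add: binomial_gbinomial gbinomial_pochhammer flip: power_mult_distrib)

section \<open>The closed form of the Veronese sequence\<close>

text \<open>In the notation of the proof idea, fs_factor, fs_ratio and veronese_closed are D, u and G_k.\<close>

definition fs_factor :: "complex \<Rightarrow> complex" where
  "fs_factor w = 1 + w * cnj w"

definition fs_ratio :: "complex \<Rightarrow> complex" where
  "fs_ratio w = - cnj w / fs_factor w"

text \<open>The n-th derivative d^n of the j-th component of f_0. As j choose n = 0 for n > j,
  the truncated exponent j - n is harmless.\<close>

definition veronese_hderiv :: "nat \<Rightarrow> nat \<Rightarrow> complex \<Rightarrow> nat \<Rightarrow> complex" where
  "veronese_hderiv N n w j =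
     of_real (sqrt (real (N choose j))) * of_nat (fact n * (j choose n)) * w ^ (j - n)"

definition veronese_coeff :: "nat \<Rightarrow> nat \<Rightarrow> nat \<Rightarrow> real" where
  "veronese_coeff N k n = real (k choose n) * (fact (N - n) / fact (N - k))"

definition veronese_closed :: "nat \<Rightarrow> nat \<Rightarrow> complex \<Rightarrow> nat \<Rightarrow> complex" where
  "veronese_closed N k w j =
     (\<Sum>n\<le>k. of_real (veronese_coeff N k n) * fs_ratio w ^ (k - n) * veronese_hderiv N n w j)"

lemma fs_factor_nonzero: "fs_factor w \<noteq> 0"
proof -
  have "fs_factor w = of_real (1 + (cmod w)\<^sup>2)"
    unfolding fs_factor_def complex_norm_square[symmetric] by simp
  then show ?thesis
    by (metis add_pos_nonneg zero_less_one zero_le_power2 of_real_eq_0_iff less_irrefl)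
qed

lemma cnj_fs_factor [simp]: "cnj (fs_factor w) = fs_factor w"
  by (simp add: fs_factor_def)

lemma has_wirtinger_derivs_fs_factor: "has_wirtinger_derivs fs_factor (cnj z) z z"
  unfolding fs_factor_def[abs_def]
  by (rule has_wirtinger_derivs_cong[OF has_wirtinger_derivs_add[OF has_wirtinger_derivs_const
        has_wirtinger_derivs_mult[OF has_wirtinger_derivs_ident has_wirtinger_derivs_cnj]]]) auto

lemma has_wirtinger_derivs_fs_ratio:
  "has_wirtinger_derivs fs_ratio (fs_ratio z ^ 2) (- 1 / fs_factor z ^ 2) z"
  using has_wirtinger_derivs_divide[OF has_wirtinger_derivs_minus[OF has_wirtinger_derivs_cnj]
      has_wirtinger_derivs_fs_factor fs_factor_nonzero]
  by (rule has_wirtinger_derivs_cong)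
     (auto simp: fs_ratio_def fs_factor_def power2_eq_square field_simps
        fs_factor_nonzero[unfolded fs_factor_def])

lemma has_wirtinger_derivs_veronese_hderiv:
  "has_wirtinger_derivs (\<lambda>w. veronese_hderiv N n w j) (veronese_hderiv N (Suc n) z j) 0 z"
proof -
  define c :: complex where "c = of_real (sqrt (real (N choose j))) * of_nat (fact n * (j choose n))"
  have "fact (Suc n) * (j choose Suc n) = fact n * (Suc n * (j choose Suc n))"
    by (simp only: fact_Suc of_nat_id mult_ac)
  then have "fact n * (j choose n) * (j - n) = fact (Suc n) * (j choose Suc n)"
    by (simp only: Suc_mult_choose_Suc mult_ac)
  then have "c * (of_nat (j - n) * z ^ (j - n - 1) * 1) = veronese_hderiv N (Suc n) z j"
    unfolding veronese_hderiv_def c_def by (simp add: mult.assoc flip: of_nat_mult)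
  moreover have "c * (of_nat (j - n) * z ^ (j - n - 1) * 0) = 0"
    by simp
  moreover have "c * w ^ (j - n) = veronese_hderiv N n w j" for w
    unfolding veronese_hderiv_def c_def ..
  ultimately show ?thesis
    using has_wirtinger_derivs_cmult[OF has_wirtinger_derivs_power[OF has_wirtinger_derivs_ident],
      of c "j - n" z]
    by (metis has_wirtinger_derivs_cong)
qed

lemma veronese_coeff_rec:
  assumes "k < N" "n \<le> Suc k"
  shows "veronese_coeff N k n * real (k - n) + (if n = 0 then 0 else veronese_coeff N k (n - 1)) =
    veronese_coeff N (Suc k) n + (2 * real k - real N) * veronese_coeff N k n"
proof -
  have fk: "(fact (N - k) :: real) = real (N - k) * fact (N - Suc k)"
    using fact_diff_eq_Suc assms(1) by blast
  have Nk: "real (N - k) = real N - real k" and Nk_pos: "real N - real k > 0"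
    using assms by simp_all
  have pos: "(fact (N - Suc k) :: real) > 0"
    by simp
  show ?thesis
  proof (cases n)
    case 0
    then show ?thesis
      using pos Nk_pos unfolding veronese_coeff_def fk Nk by (simp add: field_simps)
  next
    case (Suc m)
    have "m \<le> k"
      using assms(2) Suc by simp
    have "real (Suc m * (k choose Suc m)) = real ((k - m) * (k choose m))"
      by (simp only: Suc_mult_choose_Suc)
    then have absorb: "real (Suc m) * real (k choose Suc m) = (real k - real m) * real (k choose m)"
      using \<open>m \<le> k\<close> by (simp only: of_nat_mult of_nat_diff)
    have km: "real (k choose Suc m) * real (k - Suc m) = real (k choose Suc m) * (real k - real m - 1)"
      by (cases "Suc m \<le> k") simp_all
    define Q where "Q = fact (N - Suc m) / ((real N - real k) * fact (N - Suc k))"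
    have fm: "(fact (N - m) :: real) = (real N - real m) * fact (N - Suc m)"
      using fact_diff_eq_Suc[of m N] assms \<open>m \<le> k\<close> by simp
    have c1: "veronese_coeff N k (Suc m) = real (k choose Suc m) * Q"
      unfolding veronese_coeff_def Q_def fk Nk by simp
    have c2: "veronese_coeff N k m = real (k choose m) * (real N - real m) * Q"
      unfolding veronese_coeff_def Q_def fk fm Nk by simp
    have c3: "veronese_coeff N (Suc k) (Suc m) = real (Suc k choose Suc m) * (real N - real k) * Q"
      unfolding veronese_coeff_def Q_def using Nk_pos pos by (simp add: field_simps)
    have "real (k choose Suc m) * real (k - Suc m) + real (k choose m) * (real N - real m) =
        real (Suc k choose Suc m) * (real N - real k) + (2 * real k - real N) * real (k choose Suc m)"
      using absorb km by (simp add: algebra_simps)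
    from arg_cong[OF this, of "(*) Q"]
    have "veronese_coeff N k (Suc m) * real (k - Suc m) + veronese_coeff N k m =
        veronese_coeff N (Suc k) (Suc m) + (2 * real k - real N) * veronese_coeff N k (Suc m)"
      unfolding c1 c2 c3 by (simp add: algebra_simps)
    then show ?thesis
      using Suc by simp
  qed
qed

lemma veronese_coeff_Suc:
  assumes "Suc k \<le> N"
  shows "veronese_coeff N (Suc k) n * real (Suc k - n) = real (Suc k) * real (N - k) * veronese_coeff N k n"
proof -
  have fk: "(fact (N - k) :: real) = real (N - k) * fact (N - Suc k)"
    using fact_diff_eq_Suc assms by simp
  have "(Suc k - n) * (Suc k choose n) = Suc k * (k choose n)"
    by (metis binomial_absorb_comp diff_Suc_1)
  then have "real (Suc k choose n) * real (Suc k - n) = real (Suc k) * real (k choose n)"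
    by (metis of_nat_mult mult.commute)
  then show ?thesis
    using assms unfolding veronese_coeff_def fk by (simp add: field_simps)
qed

lemma has_wirtinger_derivs_veronese_closed_sum:
  "has_wirtinger_derivs (\<lambda>w. veronese_closed N k w j)
    (\<Sum>n\<le>k. of_real (veronese_coeff N k n) *
       (of_nat (k - n) * fs_ratio z ^ (k - n - 1) * fs_ratio z ^ 2 * veronese_hderiv N n z j
        + fs_ratio z ^ (k - n) * veronese_hderiv N (Suc n) z j))
    (\<Sum>n\<le>k. of_real (veronese_coeff N k n) *
       (of_nat (k - n) * fs_ratio z ^ (k - n - 1) * (- 1 / fs_factor z ^ 2) * veronese_hderiv N n z j))
    z"
proof -
  have "has_wirtinger_derivs
      (\<lambda>w. \<Sum>n\<le>k. of_real (veronese_coeff N k n) * (fs_ratio w ^ (k - n) * veronese_hderiv N n w j))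
      (\<Sum>n\<le>k. of_real (veronese_coeff N k n) * (fs_ratio z ^ (k - n) * veronese_hderiv N (Suc n) z j
         + (of_nat (k - n) * fs_ratio z ^ (k - n - 1) * fs_ratio z ^ 2) * veronese_hderiv N n z j))
      (\<Sum>n\<le>k. of_real (veronese_coeff N k n) * (fs_ratio z ^ (k - n) * 0
         + (of_nat (k - n) * fs_ratio z ^ (k - n - 1) * (- 1 / fs_factor z ^ 2)) * veronese_hderiv N n z j))
      z"
    by (rule has_wirtinger_derivs_sum, rule has_wirtinger_derivs_cmult, rule has_wirtinger_derivs_mult[OF
        has_wirtinger_derivs_power[OF has_wirtinger_derivs_fs_ratio] has_wirtinger_derivs_veronese_hderiv])
  then show ?thesis
    by (rule has_wirtinger_derivs_cong) (auto simp: veronese_closed_def algebra_simps)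
qed

lemma veronese_closed_holo_sum_shift:
  "(\<Sum>n\<le>k. of_real (veronese_coeff N k n) *
       (of_nat (k - n) * fs_ratio z ^ (k - n - 1) * fs_ratio z ^ 2 * veronese_hderiv N n z j
        + fs_ratio z ^ (k - n) * veronese_hderiv N (Suc n) z j)) =
    (\<Sum>n\<le>Suc k. of_real (veronese_coeff N k n * real (k - n) + (if n = 0 then 0 else veronese_coeff N k (n - 1)))
       * fs_ratio z ^ (Suc k - n) * veronese_hderiv N n z j)"
proof -
  let ?u = "fs_ratio z" and ?e = "\<lambda>n. veronese_hderiv N n z j"
  have "of_real (veronese_coeff N k n) * (of_nat (k - n) * ?u ^ (k - n - 1) * ?u ^ 2 * ?e n) =
      of_real (veronese_coeff N k n * real (k - n)) * ?u ^ (Suc k - n) * ?e n" if "n \<le> k" for n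
  proof (cases "n = k")
    case False
    then have "Suc k - n = (k - n - 1) + 2"
      using that by simp
    then have "?u ^ (k - n - 1) * ?u ^ 2 = ?u ^ (Suc k - n)"
      by (simp only: power_add)
    then show ?thesis
      by (simp add: mult_ac)
  qed simp
  then have "(\<Sum>n\<le>k. of_real (veronese_coeff N k n) * (of_nat (k - n) * ?u ^ (k - n - 1) * ?u ^ 2 * ?e n))
      = (\<Sum>n\<le>k. of_real (veronese_coeff N k n * real (k - n)) * ?u ^ (Suc k - n) * ?e n)"
    by (intro sum.cong) simp_all
  also have "\<dots> = (\<Sum>n\<le>Suc k. of_real (veronese_coeff N k n * real (k - n)) * ?u ^ (Suc k - n) * ?e n)"
    by (simp add: veronese_coeff_def)
  finally have "(\<Sum>n\<le>k. of_real (veronese_coeff N k n) * (of_nat (k - n) * ?u ^ (k - n - 1) * ?u ^ 2 * ?e n))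
      = (\<Sum>n\<le>Suc k. of_real (veronese_coeff N k n * real (k - n)) * ?u ^ (Suc k - n) * ?e n)" .
  moreover have "(\<Sum>n\<le>k. of_real (veronese_coeff N k n) * (?u ^ (k - n) * ?e (Suc n)))
      = (\<Sum>n\<le>Suc k. of_real (if n = 0 then 0 else veronese_coeff N k (n - 1)) * ?u ^ (Suc k - n) * ?e n)"
    by (subst sum.atMost_Suc_shift) (simp add: algebra_simps)
  ultimately show ?thesis
    by (simp add: distrib_left distrib_right sum.distrib)
qed

lemma fs_ratio_mult_veronese_closed:
  "of_real c * fs_ratio z * veronese_closed N k z j =
    (\<Sum>n\<le>Suc k. of_real (c * veronese_coeff N k n) * fs_ratio z ^ (Suc k - n) * veronese_hderiv N n z j)"
proof -
  have "(\<Sum>n\<le>Suc k. of_real (c * veronese_coeff N k n) * fs_ratio z ^ (Suc k - n) * veronese_hderiv N n z j)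
      = (\<Sum>n\<le>k. of_real (c * veronese_coeff N k n) * fs_ratio z ^ (Suc k - n) * veronese_hderiv N n z j)"
    by (simp add: veronese_coeff_def)
  also have "\<dots> = of_real c * fs_ratio z * veronese_closed N k z j"
    unfolding veronese_closed_def sum_distrib_left
    by (intro sum.cong refl) (simp add: Suc_diff_le mult_ac)
  finally show ?thesis ..
qed

lemma veronese_closed_holo_sum:
  assumes "k < N"
  shows "(\<Sum>n\<le>Suc k. of_real (veronese_coeff N k n * real (k - n) + (if n = 0 then 0 else veronese_coeff N k (n - 1)))
       * fs_ratio z ^ (Suc k - n) * veronese_hderiv N n z j) =
    veronese_closed N (Suc k) z j + (2 * of_nat k - of_nat N) * fs_ratio z * veronese_closed N k z j"
proof -
  let ?u = "fs_ratio z" and ?e = "\<lambda>n. veronese_hderiv N n z j" and ?c = "2 * real k - real N"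
  have "(\<Sum>n\<le>Suc k. of_real (veronese_coeff N k n * real (k - n) + (if n = 0 then 0 else veronese_coeff N k (n - 1)))
       * ?u ^ (Suc k - n) * ?e n) =
      (\<Sum>n\<le>Suc k. of_real (veronese_coeff N (Suc k) n + ?c * veronese_coeff N k n) * ?u ^ (Suc k - n) * ?e n)"
    by (intro sum.cong refl) (simp only: veronese_coeff_rec[OF assms] atMost_iff)
  also have "\<dots> = veronese_closed N (Suc k) z j + of_real ?c * ?u * veronese_closed N k z j"
    unfolding fs_ratio_mult_veronese_closed unfolding veronese_closed_def
    by (simp only: of_real_add distrib_right sum.distrib)
  finally show ?thesis
    by simp
qed

lemma veronese_closed_antiholo_sum:
  assumes "k \<le> N"
  shows "(\<Sum>n\<le>k. of_real (veronese_coeff N k n) *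
       (of_nat (k - n) * fs_ratio z ^ (k - n - 1) * (- 1 / fs_factor z ^ 2) * veronese_hderiv N n z j)) =
    - of_nat k * of_nat (N + 1 - k) / fs_factor z ^ 2 * veronese_closed N (k - 1) z j"
proof (cases k)
  case (Suc m)
  let ?u = "fs_ratio z" and ?e = "\<lambda>n. veronese_hderiv N n z j" and ?d = "- 1 / fs_factor z ^ 2"
  have "(\<Sum>n\<le>Suc m. of_real (veronese_coeff N (Suc m) n) * (of_nat (Suc m - n) * ?u ^ (Suc m - n - 1) * ?d * ?e n))
      = (\<Sum>n\<le>m. of_real (veronese_coeff N (Suc m) n * real (Suc m - n)) * (?u ^ (m - n) * ?d * ?e n))"
    by (simp add: mult_ac)
  also have "\<dots> = (\<Sum>n\<le>m. of_nat (Suc m) * of_nat (N - m) * ?d * (of_real (veronese_coeff N m n) * ?u ^ (m - n) * ?e n))"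
  proof (intro sum.cong refl)
    fix n
    have "(of_real (veronese_coeff N (Suc m) n * real (Suc m - n)) :: complex) =
        of_nat (Suc m) * of_nat (N - m) * of_real (veronese_coeff N m n)"
      unfolding veronese_coeff_Suc[of m N n, OF assms[unfolded Suc]] by simp
    then show "of_real (veronese_coeff N (Suc m) n * real (Suc m - n)) * (?u ^ (m - n) * ?d * ?e n) =
        of_nat (Suc m) * of_nat (N - m) * ?d * (of_real (veronese_coeff N m n) * ?u ^ (m - n) * ?e n)"
      by (simp only: mult_ac)
  qed
  also have "\<dots> = of_nat (Suc m) * of_nat (N - m) * ?d * veronese_closed N m z j"
    by (simp only: veronese_closed_def sum_distrib_left)
  also have "\<dots> = - of_nat (Suc m) * of_nat (N + 1 - Suc m) / fs_factor z ^ 2 * veronese_closed N (Suc m - 1) z j"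
    by (simp add: field_simps del: of_nat_Suc)
  finally show ?thesis
    unfolding Suc .
qed simp

lemma has_wirtinger_derivs_veronese_closed:
  assumes "k \<le> N"
  shows "has_wirtinger_derivs (\<lambda>w. veronese_closed N k w j) (wirtinger (\<lambda>w. veronese_closed N k w j) z)
    (- of_nat k * of_nat (N + 1 - k) / fs_factor z ^ 2 * veronese_closed N (k - 1) z j) z"
  using has_wirtinger_derivs_veronese_closed_sum[of N k j z]
  by (rule has_wirtinger_derivs_cong[OF _ refl
        wirtinger_eqI[OF has_wirtinger_derivs_veronese_closed_sum, symmetric]
        veronese_closed_antiholo_sum[OF assms]])

lemma wirtinger_veronese_closed:
  assumes "k < N"
  shows "wirtinger (\<lambda>w. veronese_closed N k w j) z =
    veronese_closed N (Suc k) z j + (2 * of_nat k - of_nat N) * fs_ratio z * veronese_closed N k z j"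
  using wirtinger_eqI[OF has_wirtinger_derivs_veronese_closed_sum[of N k j z]]
  unfolding veronese_closed_holo_sum_shift veronese_closed_holo_sum[OF assms] .

section \<open>Orthogonality of the closed forms\<close>

definition veronese_closed_inner :: "nat \<Rightarrow> nat \<Rightarrow> nat \<Rightarrow> complex \<Rightarrow> complex" where
  "veronese_closed_inner N m k w = (\<Sum>l\<le>N. cnj (veronese_closed N m w l) * veronese_closed N k w l)"

definition veronese_closed_norm2 :: "nat \<Rightarrow> nat \<Rightarrow> complex \<Rightarrow> complex" where
  "veronese_closed_norm2 N k w =
     of_real (fact k * fact N / fact (N - k)) * fs_factor w ^ N / fs_factor w ^ (2 * k)"

lemma cnj_veronese_closed_inner: "cnj (veronese_closed_inner N m k w) = veronese_closed_inner N k m w"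
  unfolding veronese_closed_inner_def by (simp add: mult.commute)

lemma wirtinger_veronese_closed_inner:
  assumes "m \<le> N" "k < N"
  shows "wirtinger (\<lambda>w. veronese_closed_inner N m k w) z =
    veronese_closed_inner N m (Suc k) z + (2 * of_nat k - of_nat N) * fs_ratio z * veronese_closed_inner N m k z
    - of_nat m * of_nat (N + 1 - m) / fs_factor z ^ 2 * veronese_closed_inner N (m - 1) k z"
proof -
  let ?G = "veronese_closed N" and ?a = "(2 * of_nat k - of_nat N) * fs_ratio z"
    and ?b = "of_nat m * of_nat (N + 1 - m) / fs_factor z ^ 2"
  have "wirtinger (\<lambda>w. veronese_closed_inner N m k w) z =
      (\<Sum>l\<le>N. cnj (?G m z l) * wirtinger (\<lambda>w. ?G k w l) z
        + cnj (- of_nat m * of_nat (N + 1 - m) / fs_factor z ^ 2 * ?G (m - 1) z l) * ?G k z l)"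
    unfolding veronese_closed_inner_def
    by (rule wirtinger_sum_cnj_mult[OF has_wirtinger_derivs_veronese_closed[OF assms(1)]
          has_wirtinger_derivs_veronese_closed]) (use assms in simp)
  also have "\<dots> = (\<Sum>l\<le>N. cnj (?G m z l) * ?G (Suc k) z l + ?a * (cnj (?G m z l) * ?G k z l)
        - ?b * (cnj (?G (m - 1) z l) * ?G k z l))"
    by (intro sum.cong) (simp_all add: wirtinger_veronese_closed[OF assms(2)] algebra_simps)
  also have "\<dots> = veronese_closed_inner N m (Suc k) z + ?a * veronese_closed_inner N m k z
      - ?b * veronese_closed_inner N (m - 1) k z"
    unfolding veronese_closed_inner_def sum_distrib_left sum_subtractf sum.distrib by (rule refl)
  finally show ?thesis .
qed

lemma wirtinger_veronese_closed_norm2: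
  "wirtinger (\<lambda>w. veronese_closed_norm2 N k w) z = (2 * of_nat k - of_nat N) * fs_ratio z * veronese_closed_norm2 N k z"
proof -
  let ?c = "of_real (fact k * fact N / fact (N - k)) :: complex" and ?D = "fs_factor z"
  have D: "?D \<noteq> 0"
    by (rule fs_factor_nonzero)
  have "wirtinger (\<lambda>w. ?c * (fs_factor w ^ N / fs_factor w ^ (2 * k))) z =
      ?c * (((of_nat N * ?D ^ (N - 1) * cnj z) * ?D ^ (2 * k)
        - ?D ^ N * (of_nat (2 * k) * ?D ^ (2 * k - 1) * cnj z)) / (?D ^ (2 * k))\<^sup>2)"
    by (rule wirtinger_eqI, rule has_wirtinger_derivs_cmult, rule has_wirtinger_derivs_divide[OF
        has_wirtinger_derivs_power[OF has_wirtinger_derivs_fs_factor]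
        has_wirtinger_derivs_power[OF has_wirtinger_derivs_fs_factor] power_not_zero[OF D]])
  also have "\<dots> = ?c * (((of_nat N * ?D ^ N / ?D * cnj z) * ?D ^ (2 * k)
        - ?D ^ N * (of_nat (2 * k) * ?D ^ (2 * k) / ?D * cnj z)) / (?D ^ (2 * k))\<^sup>2)"
    using mult_power_pred_eq[OF D, of N] mult_power_pred_eq[OF D, of "2 * k"] by (simp add: mult.assoc)
  also have "\<dots> = (2 * of_nat k - of_nat N) * fs_ratio z * veronese_closed_norm2 N k z"
    unfolding veronese_closed_norm2_def fs_ratio_def using D
    by (simp add: field_simps power2_eq_square)
  finally show ?thesis
    by (simp add: veronese_closed_norm2_def)
qed

lemma veronese_closed_norm2_Suc:
  assumes "Suc k \<le> N"
  shows "veronese_closed_norm2 N (Suc k) z = of_nat (Suc k) * of_nat (N - k) / fs_factor z ^ 2 * veronese_closed_norm2 N k z"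
proof -
  define c :: complex where "c = of_real (fact k * fact N / fact (N - k))"
  have f: "(fact (N - k) :: real) = real (N - k) * fact (N - Suc k)"
    using fact_diff_eq_Suc assms by simp
  have "fact (Suc k) * fact N / fact (N - Suc k) = real (Suc k) * real (N - k) * (fact k * fact N / fact (N - k))"
    unfolding f using assms by (simp add: field_simps)
  then have c: "of_real (fact (Suc k) * fact N / fact (N - Suc k)) = of_nat (Suc k) * of_nat (N - k) * c"
    unfolding c_def by (metis of_real_mult of_real_of_nat_eq)
  have "fs_factor z ^ (2 * Suc k) = fs_factor z ^ (2 * k) * fs_factor z ^ 2"
    by (simp flip: power_add)
  then show ?thesis
    unfolding veronese_closed_norm2_def c c_def[symmetric] using fs_factor_nonzero[of z]
    by (simp add: field_simps)
qed

lemma veronese_closed_inner_0_0: "veronese_closed_inner N 0 0 w = veronese_closed_norm2 N 0 w"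
proof -
  have "veronese_closed N 0 w l = of_real (sqrt (real (N choose l))) * w ^ l" for l
    by (simp add: veronese_closed_def veronese_coeff_def veronese_hderiv_def)
  then have "veronese_closed_inner N 0 0 w = (\<Sum>l\<le>N. of_nat (N choose l) * (w * cnj w) ^ l * 1 ^ (N - l))"
    unfolding veronese_closed_inner_def
    by (intro sum.cong) (auto simp: power_mult_distrib mult_ac simp flip: of_real_mult)
  also have "\<dots> = (w * cnj w + 1) ^ N"
    by (rule binomial_ring[symmetric])
  finally show ?thesis
    by (simp add: veronese_closed_norm2_def fs_factor_def add.commute)
qed

lemma veronese_closed_norm2_nonzero: "veronese_closed_norm2 N k w \<noteq> 0"
  unfolding veronese_closed_norm2_def using fs_factor_nonzero[of w] by simp

lemma veronese_closed_orthogonal: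
  assumes "k \<le> N"
  shows "(\<forall>m<k. \<forall>w. veronese_closed_inner N m k w = 0) \<and>
    (\<forall>w. veronese_closed_inner N k k w = veronese_closed_norm2 N k w)"
  using assms
proof (induction k)
  case 0
  then show ?case
    by (simp add: veronese_closed_inner_0_0)
next
  case (Suc k)
  then have kN: "k < N"
    and orth: "\<And>m w. m < k \<Longrightarrow> veronese_closed_inner N m k w = 0"
    and norm: "\<And>w. veronese_closed_inner N k k w = veronese_closed_norm2 N k w"
    by auto
  let ?a = "\<lambda>z. (2 * of_nat k - of_nat N) * fs_ratio z"
  have orth_Suc: "veronese_closed_inner N m (Suc k) z = 0" if "m \<le> k" for m z
  proof -
    have "wirtinger (\<lambda>w. veronese_closed_inner N m k w) z = ?a z * veronese_closed_inner N m k z"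
    proof (cases "m = k")
      case True
      then show ?thesis
        using wirtinger_veronese_closed_norm2[of N k z] by (simp add: norm)
    next
      case False
      with that show ?thesis
        by (simp add: orth wirtinger_const)
    qed
    moreover have "veronese_closed_inner N (m - 1) k z = 0 \<or> m = 0"
      using orth that by (cases m) auto
    ultimately show ?thesis
      using wirtinger_veronese_closed_inner[of m N k z] that kN by auto
  qed
  have "veronese_closed_inner N (Suc k) k w = 0" for w
    using orth_Suc[of k w] cnj_veronese_closed_inner[of N k "Suc k" w] by simp
  then have "0 = veronese_closed_inner N (Suc k) (Suc k) z
      - of_nat (Suc k) * of_nat (N - k) / fs_factor z ^ 2 * veronese_closed_norm2 N k z" for z
    using wirtinger_veronese_closed_inner[of "Suc k" N k z] Suc.prems kN by (simp add: wirtinger_const norm)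
  then have "veronese_closed_inner N (Suc k) (Suc k) z = veronese_closed_norm2 N (Suc k) z" for z
    using veronese_closed_norm2_Suc[OF Suc.prems] by (simp add: eq_diff_eq)
  with orth_Suc show ?case
    by (auto simp: less_Suc_eq_le)
qed

lemma veronese_eq_veronese_closed:
  assumes "k \<le> N"
  shows "veronese N k w j = veronese_closed N k w j"
  using assms
proof (induction k arbitrary: w j)
  case 0
  then show ?case
    by (simp add: veronese_closed_def veronese_coeff_def veronese_hderiv_def)
next
  case (Suc k)
  then have kN: "k < N" and IH: "\<And>w l. veronese N k w l = veronese_closed N k w l"
    by simp_all
  let ?a = "(2 * of_nat k - of_nat N) * fs_ratio w"
  have inner: "veronese_closed_inner N k (Suc k) w = 0" "veronese_closed_inner N k k w = veronese_closed_norm2 N k w"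
    using veronese_closed_orthogonal[of "Suc k" N] veronese_closed_orthogonal[of k N] Suc.prems by auto
  have "(\<Sum>l\<le>N. cnj (veronese N k w l) * wirtinger (\<lambda>w. veronese N k w l) w) =
      veronese_closed_inner N k (Suc k) w + ?a * veronese_closed_inner N k k w"
    unfolding IH wirtinger_veronese_closed[OF kN] veronese_closed_inner_def distrib_left sum.distrib
      sum_distrib_left
    by (simp add: mult.left_commute)
  moreover have "(\<Sum>l\<le>N. cnj (veronese N k w l) * veronese N k w l) = veronese_closed_inner N k k w"
    unfolding IH veronese_closed_inner_def ..
  ultimately show ?case
    using veronese_closed_norm2_nonzero[of N k w]
    by (simp add: inner IH wirtinger_veronese_closed[OF kN])
qed

section \<open>Krawtchouk form\<close>

lemma krawtchouk_term_eq:
  assumes "n \<le> k" "k \<le> N"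
  shows "fact N / fact (N - k) * (pochhammer (- real j) n * pochhammer (- real k) n / (pochhammer (- real N) n * fact n))
    = (- 1) ^ n * (fact n * real (j choose n)) * veronese_coeff N k n"
  using assms by (simp add: pochhammer_minus_of_nat veronese_coeff_def binomial_fact field_simps)

lemma veronese_closed_term_eq_krawtchouk_term:
  assumes "p > 0" "fs_ratio z * z = - of_real p" "n \<le> k" "k \<le> N"
  shows "of_real (fact N / fact (N - k)) * fs_ratio z ^ k * of_real (sqrt (real (N choose j))) * z ^ j
      * of_real (pochhammer (- real j) n * pochhammer (- real k) n / (pochhammer (- real N) n * fact n) * (1 / p) ^ n)
    = of_real (veronese_coeff N k n) * fs_ratio z ^ (k - n) * veronese_hderiv N n z j"
    (is "?A * _ * ?s * _ * ?t = _")
proof (cases "n \<le> j")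
  case False
  then show ?thesis
    by (simp add: veronese_hderiv_def pochhammer_minus_of_nat binomial_eq_0)
next
  case True
  define Y :: complex where "Y = of_real (fact n * real (j choose n) * veronese_coeff N k n)"
  have "?A * ?t = of_real (fact N / fact (N - k) *
      (pochhammer (- real j) n * pochhammer (- real k) n / (pochhammer (- real N) n * fact n)) * (1 / p) ^ n)"
    by (simp only: of_real_mult[symmetric] mult.assoc)
  then have At: "?A * ?t = (- 1) ^ n * Y * (1 / of_real p) ^ n"
    unfolding krawtchouk_term_eq[OF assms(3,4)] by (simp add: Y_def mult_ac)
  have uz_pow: "fs_ratio z ^ k * z ^ j = fs_ratio z ^ (k - n) * z ^ (j - n) * (- of_real p) ^ n"
    using True assms(3) unfolding assms(2)[symmetric]
    by (simp add: power_mult_distrib mult_ac flip: power_add)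
  have sgn: "(- 1) ^ n * (1 / of_real p) ^ n * (- of_real p) ^ n = (1 :: complex)"
    using assms(1) by (simp flip: power_mult_distrib)
  have "?A * fs_ratio z ^ k * ?s * z ^ j * ?t = (?A * ?t) * (fs_ratio z ^ k * z ^ j) * ?s"
    by (simp only: mult_ac)
  also have "\<dots> = Y * (fs_ratio z ^ (k - n) * z ^ (j - n) * ?s) * ((- 1) ^ n * (1 / of_real p) ^ n * (- of_real p) ^ n)"
    unfolding At uz_pow by (simp only: mult_ac)
  also have "\<dots> = of_real (veronese_coeff N k n) * fs_ratio z ^ (k - n) * veronese_hderiv N n z j"
    unfolding sgn Y_def veronese_hderiv_def by (simp add: mult_ac)
  finally show ?thesis .
qed

lemma veronese_closed_eq_krawtchouk:
  assumes "z \<noteq> 0" "k \<le> N" and p: "p = Re (z * cnj z) / (1 + Re (z * cnj z))"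
  shows "veronese_closed N k z j = of_real (fact N / fact (N - k)) * fs_ratio z ^ k
    * of_real (sqrt (real (N choose j))) * z ^ j * of_real (krawtchouk j k p N)"
proof -
  have "z * cnj z = of_real (Re (z * cnj z))" and "Re (z * cnj z) > 0"
    using assms(1) by (simp_all flip: complex_norm_square)
  then have p_pos: "p > 0" and uz: "fs_ratio z * z = - of_real p"
    unfolding p fs_ratio_def fs_factor_def by (simp_all add: field_simps)
  have kr: "krawtchouk j k p N = (\<Sum>n\<le>k. pochhammer (- real j) n * pochhammer (- real k) n
      / (pochhammer (- real N) n * fact n) * (1 / p) ^ n)"
    unfolding krawtchouk_def
    by (rule sum.mono_neutral_left) (auto simp: pochhammer_minus_of_nat)
  show ?thesis
    unfolding veronese_closed_def kr of_real_sum sum_distrib_left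
    by (intro sum.cong refl, rule sym, rule veronese_closed_term_eq_krawtchouk_term[OF p_pos uz _ assms(2)])
       simp
qed

lemma veronese_proj_eq_krawtchouk:
  assumes z: "z \<noteq> 0" and "k \<le> N" and p: "p = Re (z * cnj z) / (1 + Re (z * cnj z))"
  shows "veronese_proj N k z i j =
    of_nat (N choose k) * (z * cnj z) ^ k / fs_factor z ^ N
    * z ^ i * cnj z ^ j * of_real (sqrt (real (N choose i) * real (N choose j)))
    * of_real (krawtchouk i k p N) * of_real (krawtchouk j k p N)"
proof -
  define A :: complex where "A = of_real (fact N / fact (N - k))"
  define c :: complex where "c = of_real (fact k * fact N / fact (N - k))"
  let ?u = "fs_ratio z" and ?D = "fs_factor z"
    and ?s = "\<lambda>i. of_real (sqrt (real (N choose i))) :: complex" and ?K = "\<lambda>i. of_real (krawtchouk i k p N) :: complex"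
  have D: "?D \<noteq> 0"
    by (rule fs_factor_nonzero)
  have den: "(\<Sum>l\<le>N. cnj (veronese N k z l) * veronese N k z l) = c * ?D ^ N / ?D ^ (2 * k)"
    using veronese_closed_orthogonal[OF assms(2)] veronese_eq_veronese_closed[OF assms(2)]
    unfolding veronese_closed_inner_def veronese_closed_norm2_def c_def by simp
  have f: "veronese N k z l = A * ?u ^ k * ?s l * z ^ l * ?K l" for l
    unfolding veronese_eq_veronese_closed[OF assms(2)] veronese_closed_eq_krawtchouk[OF z assms(2) p] A_def ..
  have "A * A / c = of_nat (N choose k)"
  proof -
    have "(fact N / fact (N - k)) * (fact N / fact (N - k)) / (fact k * fact N / fact (N - k)) = (fact N / (fact k * fact (N - k)) :: real)"
      by (simp add: field_simps)
    also have "\<dots> = real (N choose k)"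
      using assms(2) by (simp add: binomial_fact)
    finally show ?thesis
      unfolding A_def c_def by (metis of_real_mult of_real_divide of_real_of_nat_eq)
  qed
  moreover have "?s i * ?s j = of_real (sqrt (real (N choose i) * real (N choose j)))"
    by (simp add: real_sqrt_mult)
  moreover have "(?u * cnj ?u) ^ k * ?D ^ (2 * k) = (z * cnj z) ^ k"
  proof -
    have "?u * cnj ?u * ?D ^ 2 = z * cnj z"
      unfolding fs_ratio_def using D by (simp add: field_simps power2_eq_square)
    then show ?thesis
      by (metis power_mult power_mult_distrib)
  qed
  moreover have "veronese_proj N k z i j = (A * A / c) * ((?u * cnj ?u) ^ k * ?D ^ (2 * k)) / ?D ^ N
      * z ^ i * cnj z ^ j * (?s i * ?s j) * ?K i * ?K j"
    unfolding veronese_proj_def den unfolding f using D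
    by (simp add: A_def c_def field_simps)
  ultimately show ?thesis
    by simp
qed

theorem theorem3p1:
  fixes N :: nat and z :: complex
  assumes "N \<ge> 1" and "z \<noteq> 0"
  defines "p \<equiv> Re (z * cnj z) / (1 + Re (z * cnj z))"
  shows "(\<forall>k\<le>N. \<forall>j\<le>N.
            veronese N k z j =
              of_real (fact N / fact (N - k)) * (- cnj z / (1 + z * cnj z)) ^ k
              * of_real (sqrt (real (N choose j))) * z ^ j * of_real (krawtchouk j k p N))
       \<and> (\<forall>k\<le>N. \<forall>i\<le>N. \<forall>j\<le>N.
            veronese_proj N k z i j =
              of_nat (N choose k) * (z * cnj z) ^ k / (1 + z * cnj z) ^ N
              * z ^ i * cnj z ^ j * of_real (sqrt (real (N choose i) * real (N choose j)))
              * of_real (krawtchouk i k p N) * of_real (krawtchouk j k p N))"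
proof -
  have p: "p = Re (z * cnj z) / (1 + Re (z * cnj z))"
    by (simp add: p_def)
  show ?thesis
    using veronese_eq_veronese_closed veronese_closed_eq_krawtchouk[OF assms(2) _ p]
      veronese_proj_eq_krawtchouk[OF assms(2) _ p]
    unfolding fs_ratio_def fs_factor_def by simp
qed

end
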